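(* Let $\mathcal M$ be a left $\mathcal A$-module and $(N_i)_{i\in I}$ a family of $R$-submodules of $\mathcal M$. Then for every choice of $\vartheta$: (i) $\bigcap_{i\in I}\sigma_\vartheta(N_i)\subseteq\sigma_\vartheta\big(\bigcap_{i\in I}N_i\big)$; (ii) if $I$ is finite, then $\bigcap_{i\in I}\tau_\vartheta(N_i)\subseteq\tau_\vartheta\big(\bigcap_{i\in I}N_i\big)$. In particular, if $u\in\mathcal M$ and $N_1,\dots,N_k$ are $R$-submodules with $u\in\tau_\vartheta(N_i)$ for all $i$, then $u\in\tau_\vartheta\big(\bigcap_{i=1}^kN_i\big)$.
   Context: $R$ is a unital commutative ring and $\mathcal A$ an associative unital (not necessarily commutative) $R$-algebra. The symbol $\vartheta$ ranges over "left", "right", "pre-two-sided", "two-sided". An $R$-submodule $J\subseteq\mathcal A$ is a left (resp. right; two-sided) Mathieu subspace of $\mathcal A$ if whenever $a\in\mathcal A$ satisfies $a^m\in J$ for all $m\ge1$, then for all $b,c\in\mathcal A$ there is $N_0$ with $ba^m\in J$ (resp. $a^mc\in J$; $ba^mc\in J$) for all $m\ge N_0$; pre-two-sided means both left and right. A $\vartheta$-ideal means a left/right/two-sided ideal accordingly, and a two-sided ideal for $\vartheta$ = pre-two-sided. For a left $\mathcal A$-module $\mathcal M$, $u\in\mathcal M$, $N\subseteq \mathcal M$, $(N:u)=\{a\in\mathcal A: au\in N\}$. For an $R$-submodule $N$ of $\mathcal M$, $\sigma_\vartheta(N)=\{u\in\mathcal M: (N:u)\text{ is a }\vartheta\text{-ideal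 of }\mathcal A\}$ and $\tau_\vartheta(N)=\{u\in\mathcal M: (N:u)\text{ is a }\vartheta\text{-Mathieu subspace of }\mathcal A\}$. *)

theory Defs
  imports Main
begin

text \<open>The algebra A is the whole type 'a (a unital ring), the base ring R is the whole
type 'r (a commutative unital ring), acting on A by sA; the left A-module M is the
whole type 'm (an abelian group) with action act. The R-module structure of M is the
one induced by r u = (r 1_A) u.\<close>

definition R_algebra :: "('r::comm_ring_1 \<Rightarrow> 'a::ring_1 \<Rightarrow> 'a) \<Rightarrow> bool" where
  "R_algebra sA \<longleftrightarrow>
     (\<forall>r a b. sA r (a + b) = sA r a + sA r b) \<and>
     (\<forall>r s a. sA (r + s) a = sA r a + sA s a) \<and>
     (\<forall>r s a. sA (r * s) a = sA r (sA s a)) \<and>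
     (\<forall>a. sA 1 a = a) \<and>
     (\<forall>r a b. sA r (a * b) = sA r a * b) \<and>
     (\<forall>r a b. sA r (a * b) = a * sA r b)"

definition left_module :: "('a::ring_1 \<Rightarrow> 'm::ab_group_add \<Rightarrow> 'm) \<Rightarrow> bool" where
  "left_module act \<longleftrightarrow>
     (\<forall>a u v. act a (u + v) = act a u + act a v) \<and>
     (\<forall>a b u. act (a + b) u = act a u + act b u) \<and>
     (\<forall>a b u. act (a * b) u = act a (act b u)) \<and>
     (\<forall>u. act 1 u = u)"

definition R_submodule_A :: "('r::comm_ring_1 \<Rightarrow> 'a::ring_1 \<Rightarrow> 'a) \<Rightarrow> 'a set \<Rightarrow> bool" where
  "R_submodule_A sA J \<longleftrightarrow> 0 \<in> J \<and> (\<forall>x\<in>J. \<forall>y\<in>J. x + y \<in> J) \<and> (\<forall>r. \<forall>x\<in>J. sA r x \<in> J)"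

definition R_submodule_M :: "('r::comm_ring_1 \<Rightarrow> 'a::ring_1 \<Rightarrow> 'a) \<Rightarrow> ('a \<Rightarrow> 'm::ab_group_add \<Rightarrow> 'm)
     \<Rightarrow> 'm set \<Rightarrow> bool" where
  "R_submodule_M sA act N \<longleftrightarrow> 0 \<in> N \<and> (\<forall>x\<in>N. \<forall>y\<in>N. x + y \<in> N) \<and>
     (\<forall>r. \<forall>x\<in>N. act (sA r 1) x \<in> N)"

datatype theta = Left | Right | PreTwoSided | TwoSided

definition add_subgroup :: "'a::ring_1 set \<Rightarrow> bool" where
  "add_subgroup I \<longleftrightarrow> 0 \<in> I \<and> (\<forall>x\<in>I. \<forall>y\<in>I. x + y \<in> I) \<and> (\<forall>x\<in>I. - x \<in> I)"

definition left_ideal :: "'a::ring_1 set \<Rightarrow> bool" where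
  "left_ideal I \<longleftrightarrow> add_subgroup I \<and> (\<forall>a. \<forall>x\<in>I. a * x \<in> I)"

definition right_ideal :: "'a::ring_1 set \<Rightarrow> bool" where
  "right_ideal I \<longleftrightarrow> add_subgroup I \<and> (\<forall>a. \<forall>x\<in>I. x * a \<in> I)"

definition two_sided_ideal :: "'a::ring_1 set \<Rightarrow> bool" where
  "two_sided_ideal I \<longleftrightarrow> left_ideal I \<and> right_ideal I"

fun theta_ideal :: "theta \<Rightarrow> 'a::ring_1 set \<Rightarrow> bool" where
  "theta_ideal Left I = left_ideal I"
| "theta_ideal Right I = right_ideal I"
| "theta_ideal PreTwoSided I = two_sided_ideal I"
| "theta_ideal TwoSided I = two_sided_ideal I"

definition left_Mathieu :: "('r::comm_ring_1 \<Rightarrow> 'a::ring_1 \<Rightarrow> 'a) \<Rightarrow> 'a set \<Rightarrow> bool" where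
  "left_Mathieu sA J \<longleftrightarrow> R_submodule_A sA J \<and>
     (\<forall>a. (\<forall>m::nat. m \<ge> 1 \<longrightarrow> a ^ m \<in> J) \<longrightarrow>
        (\<forall>b. \<exists>N0. \<forall>m\<ge>N0. b * a ^ m \<in> J))"

definition right_Mathieu :: "('r::comm_ring_1 \<Rightarrow> 'a::ring_1 \<Rightarrow> 'a) \<Rightarrow> 'a set \<Rightarrow> bool" where
  "right_Mathieu sA J \<longleftrightarrow> R_submodule_A sA J \<and>
     (\<forall>a. (\<forall>m::nat. m \<ge> 1 \<longrightarrow> a ^ m \<in> J) \<longrightarrow>
        (\<forall>c. \<exists>N0. \<forall>m\<ge>N0. a ^ m * c \<in> J))"

definition two_sided_Mathieu :: "('r::comm_ring_1 \<Rightarrow> 'a::ring_1 \<Rightarrow> 'a) \<Rightarrow> 'a set \<Rightarrow> bool" where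
  "two_sided_Mathieu sA J \<longleftrightarrow> R_submodule_A sA J \<and>
     (\<forall>a. (\<forall>m::nat. m \<ge> 1 \<longrightarrow> a ^ m \<in> J) \<longrightarrow>
        (\<forall>b c. \<exists>N0. \<forall>m\<ge>N0. b * a ^ m * c \<in> J))"

fun theta_Mathieu :: "('r::comm_ring_1 \<Rightarrow> 'a::ring_1 \<Rightarrow> 'a) \<Rightarrow> theta \<Rightarrow> 'a set \<Rightarrow> bool" where
  "theta_Mathieu sA Left J = left_Mathieu sA J"
| "theta_Mathieu sA Right J = right_Mathieu sA J"
| "theta_Mathieu sA PreTwoSided J = (left_Mathieu sA J \<and> right_Mathieu sA J)"
| "theta_Mathieu sA TwoSided J = two_sided_Mathieu sA J"

definition colon :: "('a::ring_1 \<Rightarrow> 'm \<Rightarrow> 'm) \<Rightarrow> 'm set \<Rightarrow> 'm \<Rightarrow> 'a set" where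
  "colon act N u = {a. act a u \<in> N}"

definition sigma :: "('a::ring_1 \<Rightarrow> 'm \<Rightarrow> 'm) \<Rightarrow> theta \<Rightarrow> 'm set \<Rightarrow> 'm set" where
  "sigma act th N = {u. theta_ideal th (colon act N u)}"

definition tau :: "('r::comm_ring_1 \<Rightarrow> 'a::ring_1 \<Rightarrow> 'a) \<Rightarrow> ('a \<Rightarrow> 'm \<Rightarrow> 'm) \<Rightarrow> theta
     \<Rightarrow> 'm set \<Rightarrow> 'm set" where
  "tau sA act th N = {u. theta_Mathieu sA th (colon act N u)}"

end

theory Submission
  imports Defs
begin

text \<open>
  Both parts of the proposition rest on one observation: the colon operator turns
  intersections of submodules into intersections of subsets of the algebra,
  (\<Inter>i. N i : u) = \<Inter>i. (N i : u).  Hence it suffices to know that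

  \<^item> an arbitrary intersection of theta-ideals is a theta-ideal (giving (i) for sigma), and
  \<^item> a finite intersection of theta-Mathieu subspaces is again one (giving (ii) for tau).

  The second fact is proved for two subspaces and extended by finite induction, the
  empty intersection being the whole algebra.  For two subspaces the Mathieu conditions
  hold "for all sufficiently large m" in each subspace, so they hold eventually in the
  intersection; we phrase this with the filter of sufficiently large natural numbers.
  The "in particular" clause is part (ii) for the finite index set {1..k}.
\<close>

lemma colon_Inter: "colon act (\<Inter>i\<in>I. N i) u = (\<Inter>i\<in>I. colon act (N i) u)"
  by (auto simp: colon_def)

lemma add_subgroup_Inter: "\<forall>i\<in>I. add_subgroup (J i) \<Longrightarrow> add_subgroup (\<Inter>i\<in>I. J i)"
  by (simp add: add_subgroup_def)

lemma left_ideal_Inter: "\<forall>i\<in>I. left_ideal (J i) \<Longrightarrow> left_ideal (\<Inter>i\<in>I. J i)"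
  by (simp add: left_ideal_def add_subgroup_Inter)

lemma right_ideal_Inter: "\<forall>i\<in>I. right_ideal (J i) \<Longrightarrow> right_ideal (\<Inter>i\<in>I. J i)"
  by (simp add: right_ideal_def add_subgroup_Inter)

lemma theta_ideal_Inter: "\<forall>i\<in>I. theta_ideal th (J i) \<Longrightarrow> theta_ideal th (\<Inter>i\<in>I. J i)"
  by (cases th) (simp_all add: two_sided_ideal_def left_ideal_Inter right_ideal_Inter)

lemma sigma_Inter: "(\<Inter>i\<in>I. sigma act th (N i)) \<subseteq> sigma act th (\<Inter>i\<in>I. N i)"
  unfolding sigma_def colon_Inter by (auto intro: theta_ideal_Inter)

lemma R_submodule_A_UNIV: "R_submodule_A sA UNIV"
  by (simp add: R_submodule_A_def)

lemma R_submodule_A_Int: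
  "R_submodule_A sA A \<Longrightarrow> R_submodule_A sA B \<Longrightarrow> R_submodule_A sA (A \<inter> B)"
  by (simp add: R_submodule_A_def)

text \<open>The Mathieu conditions, read as "eventually in m" statements, are stable under
  intersection because two eventual properties hold eventually together.\<close>

lemma left_Mathieu_Int:
  "left_Mathieu sA A \<Longrightarrow> left_Mathieu sA B \<Longrightarrow> left_Mathieu sA (A \<inter> B)"
  unfolding left_Mathieu_def eventually_sequentially [symmetric]
  by (auto intro: R_submodule_A_Int eventually_conj)

lemma right_Mathieu_Int:
  "right_Mathieu sA A \<Longrightarrow> right_Mathieu sA B \<Longrightarrow> right_Mathieu sA (A \<inter> B)"
  unfolding right_Mathieu_def eventually_sequentially [symmetric]
  by (auto intro: R_submodule_A_Int eventually_conj)

lemma two_sided_Mathieu_Int: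
  "two_sided_Mathieu sA A \<Longrightarrow> two_sided_Mathieu sA B \<Longrightarrow> two_sided_Mathieu sA (A \<inter> B)"
  unfolding two_sided_Mathieu_def eventually_sequentially [symmetric]
  by (auto intro: R_submodule_A_Int eventually_conj)

lemma theta_Mathieu_Int:
  "theta_Mathieu sA th A \<Longrightarrow> theta_Mathieu sA th B \<Longrightarrow> theta_Mathieu sA th (A \<inter> B)"
  by (cases th) (auto intro: left_Mathieu_Int right_Mathieu_Int two_sided_Mathieu_Int)

text \<open>The whole algebra is a theta-Mathieu subspace; it is the empty intersection.\<close>

lemma theta_Mathieu_UNIV: "theta_Mathieu sA th UNIV"
  by (cases th)
    (simp_all add: left_Mathieu_def right_Mathieu_def two_sided_Mathieu_def R_submodule_A_UNIV)

lemma theta_Mathieu_Inter: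
  assumes "finite I" and "\<forall>i\<in>I. theta_Mathieu sA th (J i)"
  shows "theta_Mathieu sA th (\<Inter>i\<in>I. J i)"
  using assms by (induction I rule: finite_induct) (auto intro: theta_Mathieu_Int theta_Mathieu_UNIV)

lemma tau_Inter:
  assumes "finite I"
  shows "(\<Inter>i\<in>I. tau sA act th (N i)) \<subseteq> tau sA act th (\<Inter>i\<in>I. N i)"
  unfolding tau_def colon_Inter using theta_Mathieu_Inter [OF assms] by auto

theorem proposition3p7:
  fixes sA :: "'r::comm_ring_1 \<Rightarrow> 'a::ring_1 \<Rightarrow> 'a"
    and act :: "'a \<Rightarrow> 'm::ab_group_add \<Rightarrow> 'm"
    and I :: "'i set" and N :: "'i \<Rightarrow> 'm set"
  assumes alg: "R_algebra sA"
    and modl: "left_module act"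
    and subm: "\<forall>i\<in>I. R_submodule_M sA act (N i)"
  shows "(\<forall>th. (\<Inter>i\<in>I. sigma act th (N i)) \<subseteq> sigma act th (\<Inter>i\<in>I. N i))
       \<and> (finite I \<longrightarrow> (\<forall>th. (\<Inter>i\<in>I. tau sA act th (N i)) \<subseteq> tau sA act th (\<Inter>i\<in>I. N i)))
       \<and> (\<forall>th (k::nat) (Ns :: nat \<Rightarrow> 'm set) u.
            (\<forall>i\<in>{1..k}. R_submodule_M sA act (Ns i)) \<longrightarrow>
            (\<forall>i\<in>{1..k}. u \<in> tau sA act th (Ns i)) \<longrightarrow>
            u \<in> tau sA act th (\<Inter>i\<in>{1..k}. Ns i))"
proof (intro conjI allI impI)
  fix th
  show "(\<Inter>i\<in>I. sigma act th (N i)) \<subseteq> sigma act th (\<Inter>i\<in>I. N i)"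
    by (rule sigma_Inter)
next
  fix th assume "finite I"
  then show "(\<Inter>i\<in>I. tau sA act th (N i)) \<subseteq> tau sA act th (\<Inter>i\<in>I. N i)"
    by (rule tau_Inter)
next
  fix th k and Ns :: "nat \<Rightarrow> 'm set" and u
  assume "\<forall>i\<in>{1..k}. u \<in> tau sA act th (Ns i)"
  with tau_Inter [of "{1..k}" sA act th Ns] show "u \<in> tau sA act th (\<Inter>i\<in>{1..k}. Ns i)"
    by auto
qed

end
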